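(* Let $P(s,h)=\{p_1,\dots,p_m\}$ and $P(h,t)=\{p'_1,\dots,p'_n\}$ be skyline path sets with $p_i=(w_i,c_i)$, $p'_j=(w'_j,c'_j)$, each sorted in weight-increasing order, and let $p_i^j=(w_i+w'_j,c_i+c'_j)$. Fix $i,j$ and let $P_1=\{p_k^l: k<i,\ l<j\}$ and $P_2=\{p_k^l: k>i,\ l>j\}$. Then no path in $P_1\cup P_2$ dominates $p_i^j$.
   Context: A path with value $(w,c)$ dominates a path with value $(w',c')$ if $w\le w'$, $c\le c'$, and at least one inequality is strict. A skyline path set is a set of paths no one of which dominates another (so, in two dimensions, when sorted by increasing weight the costs are non-increasing). Concatenation adds weights and costs. *)

theory Defs
  imports Complex_Main
begin

text \<open>A path value is a pair (weight, cost).\<close>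
type_synonym pval = "real \<times> real"

definition dominates :: "pval \<Rightarrow> pval \<Rightarrow> bool" where
  "dominates p q \<longleftrightarrow> fst p \<le> fst q \<and> snd p \<le> snd q \<and> (fst p < fst q \<or> snd p < snd q)"

definition pconcat :: "pval \<Rightarrow> pval \<Rightarrow> pval" where
  "pconcat p q = (fst p + fst q, snd p + snd q)"

definition skyline :: "pval list \<Rightarrow> bool" where
  "skyline P \<longleftrightarrow> (\<forall>a < length P. \<forall>b < length P. \<not> dominates (P ! a) (P ! b))"

end

theory Submission
  imports Defs
begin

text \<open>In a skyline sorted by weight the costs are non-increasing, so from P!k to P!i
  (k < i) the weight goes up and the cost goes down, and the same holds in the second list.
  A sum whose two summands both move in this direction can only dominate the other sum if one
  summand already dominates its partner, which the skyline property forbids; for k > i and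
  l > j the roles of weight and cost are exchanged.\<close>

lemma skyline_nth_not_dominates:
  assumes "skyline P" "a < length P" "b < length P"
  shows "\<not> dominates (P ! a) (P ! b)"
  using assms unfolding skyline_def by blast

lemma sorted_skyline_nth_staircase:
  assumes "skyline P" "sorted (map fst P)" "k \<le> i" "i < length P"
  shows "fst (P ! k) \<le> fst (P ! i) \<and> snd (P ! i) \<le> snd (P ! k)"
proof -
  have weight: "fst (P ! k) \<le> fst (P ! i)"
    using sorted_nth_mono[OF assms(2)] assms(3,4) by simp
  moreover have "\<not> dominates (P ! k) (P ! i)"
    using skyline_nth_not_dominates assms(1,3,4) by simp
  ultimately show ?thesis
    unfolding dominates_def by auto
qed

lemma dominates_pconcat_staircase:
  assumes "fst p \<le> fst q" "snd q \<le> snd p" "fst p' \<le> fst q'" "snd q' \<le> snd p'"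
    and "dominates (pconcat p p') (pconcat q q')"
  shows "dominates p q \<or> dominates p' q'"
  using assms unfolding dominates_def pconcat_def by auto

lemma dominates_pconcat_staircase':
  assumes "fst q \<le> fst p" "snd p \<le> snd q" "fst q' \<le> fst p'" "snd p' \<le> snd q'"
    and "dominates (pconcat p p') (pconcat q q')"
  shows "dominates p q \<or> dominates p' q'"
  using assms unfolding dominates_def pconcat_def by auto

theorem mainTheorem3:
  fixes P Q :: "pval list" and i j :: nat
  assumes "skyline P" and "skyline Q"
    and "sorted (map fst P)" and "sorted (map fst Q)"
    and "i < length P" and "j < length Q"
  shows "\<forall>p \<in> {pconcat (P ! k) (Q ! l) | k l. k < i \<and> l < j}
              \<union> {pconcat (P ! k) (Q ! l) | k l. i < k \<and> k < length P \<and> j < l \<and> l < length Q}.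
           \<not> dominates p (pconcat (P ! i) (Q ! j))"
proof (intro ballI notI)
  fix p
  assume "p \<in> {pconcat (P ! k) (Q ! l) | k l. k < i \<and> l < j}
              \<union> {pconcat (P ! k) (Q ! l) | k l. i < k \<and> k < length P \<and> j < l \<and> l < length Q}"
    and dom: "dominates p (pconcat (P ! i) (Q ! j))"
  then obtain k l where p: "p = pconcat (P ! k) (Q ! l)"
    and kl: "k < length P" "l < length Q"
    and cases: "k < i \<and> l < j \<or> i < k \<and> j < l"
    using assms(5,6) by auto
  have "dominates (P ! k) (P ! i) \<or> dominates (Q ! l) (Q ! j)"
    using cases
  proof
    assume "k < i \<and> l < j"
    then show ?thesis
      using dominates_pconcat_staircase dom[unfolded p] assms
        sorted_skyline_nth_staircase[of P k i] sorted_skyline_nth_staircase[of Q l j]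
      by simp
  next
    assume "i < k \<and> j < l"
    then show ?thesis
      using dominates_pconcat_staircase' dom[unfolded p] assms kl
        sorted_skyline_nth_staircase[of P i k] sorted_skyline_nth_staircase[of Q j l]
      by simp
  qed
  then show False
    using skyline_nth_not_dominates assms kl by blast
qed

end
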